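(* Let $\alpha,\beta\ge 1$ be real numbers and let $w$ be a random variable with the Beta distribution with parameters $\alpha,\beta$, i.e. with density proportional to $x^{\alpha-1}(1-x)^{\beta-1}$ on $[0,1]$. Let $\mu=\alpha/(\alpha+\beta)$ be the mean of $w$. Then $\mathbb{E}[\min(\mu,w)]\ge \mu(1-1/e)$. *)

theory Defs
  imports "HOL-Probability.Probability"
begin

text \<open>Density of the Beta(a,b) distribution on the real line w.r.t. Lebesgue measure:
  x^(a-1) (1-x)^(b-1) / B(a,b) on the open interval (0,1), zero elsewhere
  (the endpoints form a null set).\<close>
definition beta_density :: "real \<Rightarrow> real \<Rightarrow> real \<Rightarrow> ennreal" where
  "beta_density a b x =
     ennreal (indicator {0<..<1} x * x powr (a - 1) * (1 - x) powr (b - 1) / Beta a b)"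

end

theory Submission
  imports Defs
begin

text \<open>Write g(x) = x^(\<alpha>-1) (1-x)^(\<beta>-1), B = Beta \<alpha> \<beta> and P = \<mu>^\<alpha> (1-\<mu>)^\<beta>.
  Since (x^\<alpha> (1-x)^\<beta>)' = (\<alpha>+\<beta>) (\<mu>-x) g(x), the mean deviation below the mean has the
  closed form E[(\<mu>-w)^+] = P / ((\<alpha>+\<beta>) B); so E[min \<mu> w] = \<mu> - P / ((\<alpha>+\<beta>) B) and the claim
  becomes e P \<le> \<alpha> B. To bound B from below, split [0,1] at \<mu>. On [\<mu>,1] the integrand dominates
  the derivative of -x^(\<alpha>-1) (1-x)^\<beta> / \<beta>. On [0,\<mu>], Bernoulli's inequality and
  ln(1-x) \<ge> ln(1-\<mu>) + \<mu> - x give (1-x)^(\<beta>-1) \<ge> (1-\<mu>)^\<beta> exp((1-\<mu>) (1-(x/\<mu>)^\<alpha>)), and the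
  product of the right-hand side with x^(\<alpha>-1) has an elementary antiderivative. Adding the
  two pieces gives \<alpha> B \<ge> P e^c / c with c = 1-\<mu>, and e^c \<ge> e c.\<close>

lemma one_minus_powr_le:
  fixes t a :: real
  assumes "t > 0" "a \<ge> 1"
  shows "1 - t powr a \<le> a * (1 - t)"
proof -
  have "a * (t - 1) \<le> t powr a - 1 powr a"
    using assms by (intro convex_on_imp_above_tangent[where A = "{0<..}"] powr_convex)
       (auto intro!: derivative_eq_intros simp: interior_open)
  thus ?thesis by (simp add: algebra_simps)
qed

lemma one_minus_powr_ge_exp_bound:
  fixes a b x m :: real
  assumes a: "a \<ge> 1" and b: "b \<ge> 0" and x: "0 < x" "x \<le> m"
    and m: "m < 1" and mab: "b * m = a * (1 - m)"
  shows "(1-m) powr b * exp ((1-m) * (1 - (x/m) powr a)) \<le> (1-x) powr (b-1)"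
proof -
  have x1: "x < 1" using x m by auto
  have exponent_le: "(1-m) * (1 - (x/m) powr a) \<le> b * (m - x)"
  proof -
    have "(1-m) * (1 - (x/m) powr a) \<le> (1-m) * (a * (1 - x/m))"
      using one_minus_powr_le[of "x/m" a] x m a by (intro mult_left_mono) auto
    also have "\<dots> = (a * (1-m)) * (1 - x/m)" by simp
    also have "\<dots> = b * (m - x)"
      unfolding mab[symmetric] using x by (simp add: field_simps)
    finally show ?thesis .
  qed
  have "m - x \<le> ln (1-x) - ln (1-m)"
  proof -
    have "ln ((1-m)/(1-x)) \<le> (1-m)/(1-x) - 1"
      using m x1 by (intro ln_le_minus_one) auto
    also have "\<dots> = - ((m - x)/(1-x))" using x1 by (simp add: field_simps)
    also have "\<dots> \<le> - (m - x)"
      using x1 x by (simp add: field_simps mult_left_le_one_le)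
    finally show ?thesis using m x1 by (simp add: ln_div)
  qed
  hence "b * (m - x) \<le> b * (ln (1-x) - ln (1-m))" using b by (intro mult_left_mono)
  hence "(1-m) powr b * exp ((1-m) * (1 - (x/m) powr a)) \<le> exp (b * ln (1-x))"
    using exponent_le m by (simp add: powr_def exp_add[symmetric] algebra_simps)
  also have "\<dots> = (1-x) powr b" using x1 by (simp add: powr_def)
  also have "\<dots> \<le> (1-x) powr (b-1)"
    using x1 x by (intro powr_mono') auto
  finally show ?thesis .
qed

lemma integral_beta_kernel_left_ge:
  fixes a b m :: real
  assumes a: "a \<ge> 1" and b: "b > 0" and m: "0 < m" "m < 1" and mab: "b * m = a * (1 - m)"
  shows "m powr a * (1-m) powr b * (exp (1-m) - 1) / (a * (1-m))
           \<le> integral {0..m} (\<lambda>x. x powr (a-1) * (1-x) powr (b-1))"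
proof -
  define K where "K = m powr a * (1-m) powr b / (a * (1-m))"
  define H where "H = (\<lambda>x::real. - K * exp ((1-m) * (1 - (x/m) powr a)))"
  define l where "l = (\<lambda>x::real. x powr (a-1) * (1-m) powr b * exp ((1-m) * (1 - (x/m) powr a)))"
  have cont: "continuous_on {0..m} H"
    unfolding H_def using a m by (intro continuous_intros continuous_on_powr') auto
  have der: "(H has_vector_derivative l x) (at x)" if x: "x \<in> {0<..<m}" for x
  proof -
    let ?D = "- K * (exp ((1-m) * (1 - (x/m) powr a)) * ((1-m) * (- (a * (x/m) powr (a-1) * (1/m)))))"
    have "(H has_real_derivative ?D) (at x)"
      unfolding H_def using x a m by (auto intro!: derivative_eq_intros simp: field_simps)
    moreover have "?D = l x"
    proof -
      have quot: "(x/m) powr (a-1) = x powr (a-1) / m powr (a-1)"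
        using x m by (simp add: powr_divide)
      have pow: "m powr a = m * m powr (a-1)"
        using m by (simp add: powr_diff)
      have "m powr (a-1) > 0" using m by simp
      thus ?thesis unfolding l_def K_def quot pow using m a by (simp add: field_simps)
    qed
    ultimately show ?thesis by (simp add: has_real_derivative_iff_has_vector_derivative)
  qed
  have "(l has_integral (H m - H 0)) {0..m}"
    using m by (intro fundamental_theorem_of_calculus_interior cont der) auto
  moreover have "(\<lambda>x. x powr (a-1) * (1-x) powr (b-1)) integrable_on {0..m}"
    using a b m by (intro integrable_subinterval_real[OF integrable_Beta']) auto
  moreover have "l x \<le> x powr (a-1) * (1-x) powr (b-1)" if "x \<in> {0..m}" for x
  proof (cases "x = 0")
    case False
    hence "0 < x" "x \<le> m" using that by auto
    hence "x powr (a-1) * ((1-m) powr b * exp ((1-m) * (1 - (x/m) powr a)))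
             \<le> x powr (a-1) * (1-x) powr (b-1)"
      using a b m mab by (intro mult_left_mono one_minus_powr_ge_exp_bound) auto
    thus ?thesis by (simp add: l_def mult.assoc)
  qed (simp add: l_def)
  ultimately have "H m - H 0 \<le> integral {0..m} (\<lambda>x. x powr (a-1) * (1-x) powr (b-1))"
    by (intro has_integral_le[OF _ integrable_integral]) auto
  moreover have "H m - H 0 = K * (exp (1-m) - 1)"
    unfolding H_def using m a by (simp add: algebra_simps)
  ultimately show ?thesis by (simp add: K_def)
qed

lemma integral_beta_kernel_right_ge:
  fixes a b m :: real
  assumes a: "a \<ge> 1" and b: "b > 0" and m: "0 < m" "m \<le> 1"
  shows "m powr (a-1) * (1-m) powr b / b
           \<le> integral {m..1} (\<lambda>x. x powr (a-1) * (1-x) powr (b-1))"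
proof -
  define H where "H = (\<lambda>x::real. - (x powr (a-1) * (1-x) powr b) / b)"
  define l where "l = (\<lambda>x::real. x powr (a-1) * (1-x) powr (b-1)
                                 - (a-1)/b * x powr (a-2) * (1-x) powr b)"
  have cont: "continuous_on {m..1} H"
    unfolding H_def using a b m by (intro continuous_intros continuous_on_powr') auto
  have der: "(H has_vector_derivative l x) (at x)" if x: "x \<in> {m<..<1}" for x
  proof -
    have "(H has_real_derivative
            (- ((a-1) * x powr (a-1-1) * (1-x) powr b - b * (1-x) powr (b-1) * x powr (a-1)) / b))
          (at x)"
      unfolding H_def using x a b m by (auto intro!: derivative_eq_intros simp: field_simps)
    moreover have "- ((a-1) * x powr (a-1-1) * (1-x) powr b - b * (1-x) powr (b-1) * x powr (a-1)) / b
                   = l x"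
      unfolding l_def using b by (simp add: field_simps)
    ultimately show ?thesis by (simp add: has_real_derivative_iff_has_vector_derivative)
  qed
  have "(l has_integral (H 1 - H m)) {m..1}"
    using m by (intro fundamental_theorem_of_calculus_interior cont der) auto
  moreover have "(\<lambda>x. x powr (a-1) * (1-x) powr (b-1)) integrable_on {m..1}"
    using a b m by (intro integrable_subinterval_real[OF integrable_Beta']) auto
  moreover have "l x \<le> x powr (a-1) * (1-x) powr (b-1)" for x
    unfolding l_def using a b by auto
  ultimately have "H 1 - H m \<le> integral {m..1} (\<lambda>x. x powr (a-1) * (1-x) powr (b-1))"
    by (intro has_integral_le[OF _ integrable_integral]) auto
  moreover have "H 1 - H m = m powr (a-1) * (1-m) powr b / b"
    unfolding H_def using b by simp
  ultimately show ?thesis by simp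
qed

lemma exp_mean_powr_le_Beta:
  fixes a b m :: real
  assumes a: "a \<ge> 1" and b: "b > 0" and m_def: "m = a / (a + b)"
  shows "exp 1 * (m powr a * (1-m) powr b) \<le> a * Beta a b"
proof -
  define P where "P = m powr a * (1-m) powr b"
  define c where "c = 1 - m"
  have m: "0 < m" "m < 1" and c: "0 < c" "c < 1"
    using a b unfolding m_def c_def by (auto simp: field_simps)
  have mab: "b * m = a * (1 - m)"
    using a b unfolding m_def by (simp add: field_simps)
  have "Beta a b = integral {0..m} (\<lambda>x. x powr (a-1) * (1-x) powr (b-1))
                   + integral {m..1} (\<lambda>x. x powr (a-1) * (1-x) powr (b-1))"
    using a b m Henstock_Kurzweil_Integration.integral_combine[OF _ _ integrable_Beta'[of a b], of m]
          integral_unique[OF has_integral_Beta_real, of a b] by auto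
  moreover have "P * (exp c - 1) / (a * c) \<le> integral {0..m} (\<lambda>x. x powr (a-1) * (1-x) powr (b-1))"
    using integral_beta_kernel_left_ge[OF a b m mab] by (simp add: P_def c_def)
  moreover have "P / (a * c) \<le> integral {m..1} (\<lambda>x. x powr (a-1) * (1-x) powr (b-1))"
  proof -
    have pow: "m powr a = m * m powr (a-1)" using m by (simp add: powr_diff)
    have ac: "a * c = b * m" using mab by (simp add: c_def)
    have "P / (a * c) = m * (m powr (a-1) * (1-m) powr b) / (b * m)"
      unfolding P_def pow ac by (simp add: mult.assoc)
    hence "P / (a * c) = m powr (a-1) * (1-m) powr b / b"
      using m by simp
    thus ?thesis using integral_beta_kernel_right_ge[OF a b m(1)] m by simp
  qed
  ultimately have "P * (exp c - 1) / (a * c) + P / (a * c) \<le> Beta a b" by linarith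
  hence bound: "P * exp c \<le> c * (a * Beta a b)"
    using a c by (simp add: field_simps)
  have "exp 1 * c \<le> exp c"
    using exp_ge_add_one_self[of "c - 1"] mult_left_mono[of c "exp (c - 1)" "exp 1"]
    by (simp add: exp_add[symmetric])
  hence "c * (exp 1 * P) \<le> P * exp c"
    using mult_right_mono[of "exp 1 * c" "exp c" P] by (simp add: P_def ac_simps)
  also note bound
  finally show ?thesis
    using c unfolding P_def[symmetric] by simp
qed

lemma has_integral_mean_deviation_beta_kernel:
  fixes a b m :: real
  assumes a: "a > 0" and b: "b > 0" and m_def: "m = a / (a + b)"
  shows "((\<lambda>x. (m - x) * (x powr (a-1) * (1-x) powr (b-1)))
            has_integral (m powr a * (1-m) powr b / (a + b))) {0..m}"
proof -
  define F where "F = (\<lambda>x::real. x powr a * (1-x) powr b / (a + b))"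
  have m: "0 < m" "m < 1" using a b unfolding m_def by (auto simp: field_simps)
  have cont: "continuous_on {0..m} F"
    unfolding F_def using a b m by (intro continuous_intros continuous_on_powr') auto
  have der: "(F has_vector_derivative ((m - x) * (x powr (a-1) * (1-x) powr (b-1)))) (at x)"
    if x: "x \<in> {0<..<m}" for x
  proof -
    have "(F has_real_derivative
            (a * x powr (a-1) * (1-x) powr b - b * (1-x) powr (b-1) * x powr a) / (a + b)) (at x)"
      unfolding F_def using x m a b by (auto intro!: derivative_eq_intros)
    moreover have "x powr a = x * x powr (a-1)" "(1-x) powr b = (1-x) * (1-x) powr (b-1)"
      using x m by (simp_all add: powr_diff)
    ultimately show ?thesis
      using a b unfolding m_def
      by (simp add: has_real_derivative_iff_has_vector_derivative field_simps)
  qed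
  have "((\<lambda>x. (m - x) * (x powr (a-1) * (1-x) powr (b-1))) has_integral (F m - F 0)) {0..m}"
    using m by (intro fundamental_theorem_of_calculus_interior cont der) auto
  moreover have "F m - F 0 = m powr a * (1-m) powr b / (a + b)"
    unfolding F_def using a by simp
  ultimately show ?thesis by simp
qed

lemma has_integral_min_mean_beta_kernel:
  fixes a b m :: real
  assumes a: "a > 0" and b: "b > 0" and m_def: "m = a / (a + b)"
  shows "((\<lambda>x. min m x * (x powr (a-1) * (1-x) powr (b-1)))
            has_integral (m * Beta a b - m powr a * (1-m) powr b / (a + b))) {0..1}"
proof -
  have m: "0 < m" "m < 1" using a b unfolding m_def by (auto simp: field_simps)
  have "((\<lambda>x. if x \<in> {0..m} then (m - x) * (x powr (a-1) * (1-x) powr (b-1)) else 0)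
          has_integral (m powr a * (1-m) powr b / (a + b))) {0..1}"
    using m has_integral_mean_deviation_beta_kernel[OF a b m_def]
    by (subst has_integral_restrict) auto
  with has_integral_Beta_real[OF a b]
  have "((\<lambda>x. m * (x powr (a-1) * (1-x) powr (b-1))
              - (if x \<in> {0..m} then (m - x) * (x powr (a-1) * (1-x) powr (b-1)) else 0))
          has_integral (m * Beta a b - m powr a * (1-m) powr b / (a + b))) {0..1}"
    by (intro has_integral_diff has_integral_mult_right)
  thus ?thesis
    by (rule has_integral_eq[rotated]) (auto simp: min_def algebra_simps)
qed

lemma lborel_integral_eq_has_integral_nonneg:
  fixes f :: "'a::euclidean_space \<Rightarrow> real"
  assumes "f \<in> borel_measurable borel"
    and "(f has_integral I) UNIV" and "\<And>x. 0 \<le> f x"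
  shows "(\<integral>x. f x \<partial>lborel) = I"
proof -
  have "f absolutely_integrable_on UNIV"
    using assms(2,3) by (intro nonnegative_absolutely_integrable_1) auto
  hence "integrable lborel f"
    using assms(1) by (simp add: set_integrable_def integrable_completion)
  thus ?thesis
    using has_integral_integral_lborel assms(2) has_integral_unique by blast
qed

lemma expectation_min_mean_beta:
  fixes M :: "'s measure" and w :: "'s \<Rightarrow> real" and a b m :: real
  assumes "prob_space M" and a: "a > 0" and b: "b > 0"
    and dist: "distributed M lborel w (beta_density a b)" and m_def: "m = a / (a + b)"
  shows "prob_space.expectation M (\<lambda>s. min m (w s))
           = m - m powr a * (1-m) powr b / ((a + b) * Beta a b)"
proof -
  interpret prob_space M by fact
  define f where "f = (\<lambda>x::real. indicator {0<..<1} x * x powr (a-1) * (1-x) powr (b-1) / Beta a b)"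
  have B: "Beta a b > 0" unfolding Beta_def using a b by simp
  have m: "0 < m" "m < 1" using a b unfolding m_def by (auto simp: field_simps)
  have f_nonneg: "0 \<le> f x" for x
    using B by (auto simp: f_def indicator_def)
  have "distributed M lborel w (\<lambda>x. ennreal (f x))"
    using dist unfolding beta_density_def f_def by simp
  hence "expectation (\<lambda>s. min m (w s)) = (\<integral>x. f x * min m x \<partial>lborel)"
    using distributed_integral[of M lborel w f "\<lambda>x. min m x"] f_nonneg by simp
  also have "\<dots> = m - m powr a * (1-m) powr b / ((a + b) * Beta a b)"
  proof (rule lborel_integral_eq_has_integral_nonneg)
    show "(\<lambda>x. f x * min m x) \<in> borel_measurable borel"
      unfolding f_def by measurable
    show "0 \<le> f x * min m x" for x
      using m B by (auto simp: f_def indicator_def)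
    have mean_value: "(m * Beta a b - m powr a * (1-m) powr b / (a + b)) / Beta a b
                   = m - m powr a * (1-m) powr b / ((a + b) * Beta a b)"
      using B by (simp add: diff_divide_distrib)
    have "((\<lambda>x. if x \<in> {0..1} then min m x * (x powr (a-1) * (1-x) powr (b-1)) / Beta a b else 0)
            has_integral (m - m powr a * (1-m) powr b / ((a + b) * Beta a b))) UNIV"
      using has_integral_divide[OF has_integral_min_mean_beta_kernel[OF a b m_def]]
      unfolding mean_value[symmetric] by (subst has_integral_restrict_UNIV)
    thus "((\<lambda>x. f x * min m x)
            has_integral (m - m powr a * (1-m) powr b / ((a + b) * Beta a b))) UNIV"
      by (rule has_integral_spike_finite[of "{0, 1::real}", rotated 2]) (auto simp: f_def indicator_def)
  qed
  finally show ?thesis .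
qed

theorem lemma1:
  fixes M :: "'s measure" and w :: "'s \<Rightarrow> real" and \<alpha> \<beta> :: real
  assumes "prob_space M"
    and "\<alpha> \<ge> 1" and "\<beta> \<ge> 1"
    and "distributed M lborel w (beta_density \<alpha> \<beta>)"
  shows "prob_space.expectation M (\<lambda>s. min (\<alpha> / (\<alpha> + \<beta>)) (w s))
           \<ge> (\<alpha> / (\<alpha> + \<beta>)) * (1 - 1 / exp 1)"
proof -
  define m where "m = \<alpha> / (\<alpha> + \<beta>)"
  define P where "P = m powr \<alpha> * (1-m) powr \<beta>"
  define D where "D = (\<alpha> + \<beta>) * Beta \<alpha> \<beta>"
  have pos: "\<alpha> > 0" "\<beta> > 0" "D > 0"
    using assms(2,3) by (auto simp: D_def Beta_def)
  have "exp 1 * P \<le> \<alpha> * Beta \<alpha> \<beta>"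
    unfolding P_def using exp_mean_powr_le_Beta assms(2) pos(2) m_def by blast
  also have "\<alpha> * Beta \<alpha> \<beta> = m * D"
    using pos unfolding m_def D_def by (simp add: field_simps)
  finally have "P / D \<le> m / exp 1"
    using pos by (simp add: field_simps)
  moreover have "prob_space.expectation M (\<lambda>s. min m (w s)) = m - P / D"
    unfolding P_def D_def using expectation_min_mean_beta assms(1,4) pos(1,2) m_def by blast
  ultimately show ?thesis
    unfolding m_def[symmetric] by (simp add: algebra_simps)
qed

end
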